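(* Let $q=p^m$ with $p$ prime, let $k\in\mathbb N$ with $k\mid\frac{q-1}{p-1}$, put $n=\frac{q-1}{k}$, and suppose $n$ is a primitive divisor of $q-1$. Let $d$ be the minimum nonzero weight and $d'$ the maximum weight of $\mathcal C(k,q)$, and let $\lambda(\Gamma)=\max\{n-\frac{p}{p-1}d,\ \frac{p}{p-1}d'-n\}$ for $\Gamma=\Gamma(k,q)$. If $\Gamma(k,q)$ is Ramanujan and $d\le\frac{p-1}{p}n$, then $$d\ge\tfrac{p-1}{p}\big(n-2\sqrt{n-1}\big).$$ Moreover, if $\lambda(\Gamma)=n-\frac{p}{p-1}d$, then $\Gamma(k,q)$ is Ramanujan if and only if $d\ge\frac{p-1}{p}(n-2\sqrt{n-1})$.
   Context: Let $p$ be prime, $q=p^m$, $\omega$ a primitive element of $\mathbb F_q$, $\mathrm{Tr}_{q/p}$ the trace to $\mathbb F_p$. For $k\mid q-1$, $R_k=\{x^k:x\in\mathbb F_q^*\}$, and $\Gamma(k,q)$ is the Cayley graph on $\mathbb F_q$ with $u\to v$ an edge iff $v-u\in R_k$; it is $n$-regular. $\mathcal C(k,q)=\{(\mathrm{Tr}_{q/p}(\gamma\omega^{ki}))_{i=0}^{n-1}:\gamma\in\mathbb F_q\}\subseteq\mathbb F_p^n$. A divisor $n$ of $p^m-1$ is primitive if $n\nmid p^a-1$ for all $a<m$. A connected $n$-regular graph is Ramanujan if every eigenvalue $\lambda$ with $|\lambda|\ne n$ satisfies $|\lambda|\le2\sqrt{n-1}$; under the hypotheses, $\lambda(\Gamma)$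 equals the largest such $|\lambda|$. *)

theory Defs
  imports Complex_Main "HOL-Computational_Algebra.Primes"
begin

text \<open>Finite field F_q is modelled by a finite field type 'a with CARD('a) = p^m.\<close>

definition primitive_element :: "'a::{finite,field} \<Rightarrow> bool" where
  "primitive_element w \<longleftrightarrow> w \<noteq> 0 \<and> (\<forall>x. x \<noteq> 0 \<longrightarrow> (\<exists>i::nat. x = w ^ i))"

definition trace :: "nat \<Rightarrow> nat \<Rightarrow> 'a::{finite,field} \<Rightarrow> 'a" where
  "trace p m x = (\<Sum>j<m. x ^ (p ^ j))"

definition kth_powers :: "nat \<Rightarrow> 'a::{finite,field} set" where
  "kth_powers k = {x ^ k | x. x \<noteq> 0}"

definition cayley_edge :: "nat \<Rightarrow> 'a::{finite,field} \<Rightarrow> 'a \<Rightarrow> bool" where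
  "cayley_edge k u v \<longleftrightarrow> v - u \<in> kth_powers k"

definition graph_regular :: "('a::finite \<Rightarrow> 'a \<Rightarrow> bool) \<Rightarrow> nat \<Rightarrow> bool" where
  "graph_regular E n \<longleftrightarrow> (\<forall>u. card {v. E u v} = n \<and> card {v. E v u} = n)"

definition graph_connected :: "('a::finite \<Rightarrow> 'a \<Rightarrow> bool) \<Rightarrow> bool" where
  "graph_connected E \<longleftrightarrow> (\<forall>u v. E\<^sup>*\<^sup>* u v)"

definition graph_eigenvalue :: "('a::finite \<Rightarrow> 'a \<Rightarrow> bool) \<Rightarrow> complex \<Rightarrow> bool" where
  "graph_eigenvalue E lam \<longleftrightarrow>
     (\<exists>f :: 'a \<Rightarrow> complex. f \<noteq> (\<lambda>_. 0) \<and> (\<forall>u. (\<Sum>v\<in>{v. E u v}. f v) = lam * f u))"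

definition ramanujan :: "('a::finite \<Rightarrow> 'a \<Rightarrow> bool) \<Rightarrow> nat \<Rightarrow> bool" where
  "ramanujan E n \<longleftrightarrow> graph_connected E \<and> graph_regular E n \<and>
     (\<forall>lam. graph_eigenvalue E lam \<longrightarrow> cmod lam \<noteq> real n \<longrightarrow> cmod lam \<le> 2 * sqrt (real n - 1))"

definition cw_weight :: "nat \<Rightarrow> nat \<Rightarrow> 'a::{finite,field} \<Rightarrow> nat \<Rightarrow> nat \<Rightarrow> 'a \<Rightarrow> nat" where
  "cw_weight p m w k n g = card {i. i < n \<and> trace p m (g * w ^ (k * i)) \<noteq> 0}"

definition code_weights :: "nat \<Rightarrow> nat \<Rightarrow> 'a::{finite,field} \<Rightarrow> nat \<Rightarrow> nat \<Rightarrow> nat set" where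
  "code_weights p m w k n = range (cw_weight p m w k n)"

definition min_weight :: "nat \<Rightarrow> nat \<Rightarrow> 'a::{finite,field} \<Rightarrow> nat \<Rightarrow> nat \<Rightarrow> nat" where
  "min_weight p m w k n = Min (code_weights p m w k n - {0})"

definition max_weight :: "nat \<Rightarrow> nat \<Rightarrow> 'a::{finite,field} \<Rightarrow> nat \<Rightarrow> nat \<Rightarrow> nat" where
  "max_weight p m w k n = Max (code_weights p m w k n)"

definition primitive_divisor :: "nat \<Rightarrow> nat \<Rightarrow> nat \<Rightarrow> bool" where
  "primitive_divisor p m n \<longleftrightarrow> n dvd p ^ m - 1 \<and> (\<forall>a. 0 < a \<and> a < m \<longrightarrow> \<not> n dvd p ^ a - 1)"

end

theory Submission
  imports Defs "HOL-Number_Theory.Residues" "HOL-Computational_Algebra.Polynomial"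
begin

text \<open>The Cayley graph \<open>\<Gamma>(k, q)\<close> of the additive group of \<open>GF(q)\<close> is diagonalised by the
  additive characters \<open>x \<mapsto> \<psi>(\<gamma> x)\<close>, where \<open>\<psi>(x) = \<zeta>\<^sub>p\<^bsup>Tr x\<^esup>\<close>, so its eigenvalues are the
  sums \<open>\<Sum>s\<in>R\<^sub>k. \<psi>(\<gamma> s)\<close>. Since \<open>k\<close> divides \<open>(q - 1)/(p - 1)\<close>, every nonzero element of
  \<open>GF(p)\<close> is a \<open>k\<close>-th power, so multiplication by it permutes \<open>R\<^sub>k\<close> and the number of
  \<open>s \<in> R\<^sub>k\<close> with \<open>Tr(\<gamma> s) = a\<close> is the same for all \<open>a \<noteq> 0\<close>; as the values \<open>\<zeta>\<^sub>p\<^bsup>a\<^esup>\<close>,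
  \<open>a \<noteq> 0\<close>, add up to \<open>-1\<close>, the eigenvalue belonging to \<open>\<gamma>\<close> is \<open>n - p/(p - 1) wt(\<gamma>)\<close>,
  with \<open>wt(\<gamma>)\<close> the weight of the codeword of \<open>\<gamma>\<close>. Primitivity of \<open>n\<close> makes the conjugates of
  \<open>\<beta> = \<omega>\<^sup>k\<close> distinct, so the powers of \<open>\<beta>\<close> span \<open>GF(q)\<close> over \<open>GF(p)\<close>: the graph is
  connected and only \<open>\<gamma> = 0\<close> gives the zero codeword. Thus the nontrivial eigenvalues lie in
  \<open>[n - p/(p - 1) d', n - p/(p - 1) d]\<close> with the upper end attained, and the Ramanujan bound
  becomes a bound on \<open>d\<close>.\<close>

lemma power_eq_power_mod:
  fixes x :: "'a::monoid_mult"
  assumes "x ^ n = 1"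
  shows "x ^ i = x ^ (i mod n)"
proof -
  have "x ^ i = x ^ (n * (i div n) + i mod n)" by simp
  also have "\<dots> = (x ^ n) ^ (i div n) * x ^ (i mod n)" by (simp only: power_add power_mult)
  finally show ?thesis using assms by simp
qed

lemma kth_powers_mult:
  "x \<in> kth_powers k \<Longrightarrow> y \<in> kth_powers k \<Longrightarrow> x * y \<in> kth_powers k"
  by (auto simp: kth_powers_def power_mult_distrib[symmetric])

lemma cayley_edge_conv: "cayley_edge k = (\<lambda>u v. v - u \<in> kth_powers k)"
  by (simp add: fun_eq_iff cayley_edge_def)

section \<open>Finite fields of order \<open>p ^ m\<close>\<close>

locale finite_field_of_order =
  fixes p m :: nat
  assumes prime_p: "prime p" and card_UNIV: "card (UNIV :: 'a::{finite,field} set) = p ^ m"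
begin

lemma two_le_p: "2 \<le> p"
  using prime_p prime_ge_2_nat by blast

lemma CHAR_eq: "CHAR('a) = p"
proof -
  have "prime CHAR('a)" by (rule prime_CHAR_semidom) (simp add: finite_imp_CHAR_pos)
  moreover have "CHAR('a) dvd p ^ m" using CHAR_dvd_CARD[where 'a='a] card_UNIV by simp
  ultimately show ?thesis using prime_p by (metis prime_dvd_power primes_dvd_imp_eq)
qed

lemma m_pos: "0 < m"
proof (rule ccontr)
  assume "\<not> 0 < m"
  hence "card (UNIV :: 'a set) = 1" using card_UNIV by simp
  moreover have "card {0::'a, 1} \<le> card (UNIV :: 'a set)" by (rule card_mono) auto
  ultimately show False by simp
qed

lemma power_card_eq_self: "(x :: 'a) ^ (p ^ m) = x"
proof (cases "x = 0")
  case False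
  let ?U = "UNIV - {0 :: 'a}"
  have "x ^ card ?U * (\<Prod>y\<in>?U. y) = (\<Prod>y\<in>?U. x * y)"
    by (simp add: prod.distrib)
  also have "\<dots> = (\<Prod>y\<in>?U. y)"
    by (rule prod.reindex_bij_witness[of _ "\<lambda>y. y / x" "\<lambda>y. x * y"]) (use False in auto)
  finally have "x ^ card ?U = 1" by simp
  moreover have "p ^ m = Suc (card ?U)"
    using card_UNIV two_le_p by (simp add: card_Diff_singleton)
  ultimately show ?thesis by simp
qed (use two_le_p m_pos in simp)

lemma frobenius_add: "((x :: 'a) + y) ^ (p ^ j) = x ^ (p ^ j) + y ^ (p ^ j)"
  by (rule freshmans_dream') (auto simp: CHAR_eq prime_p)

lemma frobenius_sum: "(sum (f :: 'b \<Rightarrow> 'a) A) ^ (p ^ j) = (\<Sum>i\<in>A. f i ^ (p ^ j))"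
  by (rule freshmans_dream_sum') (auto simp: CHAR_eq prime_p)

lemma of_nat_eq_of_nat_iff_cong: "(of_nat i :: 'a) = of_nat j \<longleftrightarrow> [i = j] (mod p)"
  by (simp add: of_nat_eq_iff_cong_CHAR CHAR_eq)

definition prime_subfield :: "'a set" where
  "prime_subfield = range of_nat"

lemma prime_subfield_eq_image: "prime_subfield = of_nat ` {..<p}"
proof -
  have "(of_nat j :: 'a) \<in> of_nat ` {..<p}" for j
    using two_le_p of_nat_eq_of_nat_iff_cong[of j "j mod p"] by (intro image_eqI[of _ _ "j mod p"]) auto
  thus ?thesis unfolding prime_subfield_def by auto
qed

lemma inj_on_of_nat_lessThan_p: "inj_on (of_nat :: nat \<Rightarrow> 'a) {..<p}"
  by (auto simp: inj_on_def of_nat_eq_of_nat_iff_cong cong_def)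

lemma card_prime_subfield: "card prime_subfield = p"
  unfolding prime_subfield_eq_image using inj_on_of_nat_lessThan_p by (simp add: card_image)

lemma of_nat_power_p: "(of_nat j :: 'a) ^ p = of_nat j"
proof (induction j)
  case (Suc j)
  have "(1 + of_nat j :: 'a) ^ p = 1 + of_nat j ^ p" using frobenius_add[of 1 "of_nat j" 1] by simp
  thus ?case using Suc by simp
qed (use two_le_p in simp)

text \<open>The prime subfield is the set of roots of \<open>X ^ p - X\<close>, which has at most \<open>p\<close> roots.\<close>
lemma prime_subfield_iff: "c \<in> prime_subfield \<longleftrightarrow> c ^ p = c"
proof
  assume c: "c ^ p = c"
  define f :: "'a poly" where "f = monom 1 p + [:0, -1:]"
  have "degree f = p" unfolding f_def using two_le_p
    by (subst degree_add_eq_left) (auto simp: degree_monom_eq)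
  hence "f \<noteq> 0" using two_le_p by auto
  have roots: "prime_subfield \<subseteq> {x. poly f x = 0}"
    using of_nat_power_p by (auto simp: f_def poly_monom prime_subfield_def)
  have "card {x. poly f x = 0} \<le> card prime_subfield"
    using card_poly_roots_bound[OF \<open>f \<noteq> 0\<close>] \<open>degree f = p\<close> card_prime_subfield by simp
  hence "prime_subfield = {x. poly f x = 0}"
    using roots by (intro card_seteq) auto
  moreover have "poly f c = 0" using c by (simp add: f_def poly_monom)
  ultimately show "c \<in> prime_subfield" by blast
qed (use of_nat_power_p in \<open>auto simp: prime_subfield_def\<close>)

lemma prime_subfield_power: "c \<in> prime_subfield \<Longrightarrow> c ^ (p ^ j) = c"
  by (induction j) (simp_all add: power_mult prime_subfield_iff)

lemma prime_subfield_0 [simp]: "0 \<in> prime_subfield"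
  and prime_subfield_of_nat [simp]: "of_nat j \<in> prime_subfield"
  by (auto simp: prime_subfield_def intro: range_eqI[of _ _ 0])

lemma prime_subfield_inverse: "c \<in> prime_subfield \<Longrightarrow> inverse c \<in> prime_subfield"
  by (simp add: prime_subfield_iff power_inverse)

lemma prime_subfield_diff:
  assumes "a \<in> prime_subfield" "b \<in> prime_subfield"
  shows "a - b \<in> prime_subfield"
proof -
  have "(- b) ^ p = - b"
    using assms(2) minus_power_prime_CHAR[of p b] by (simp add: prime_subfield_iff CHAR_eq prime_p)
  thus ?thesis using assms frobenius_add[of a "- b" 1] by (simp add: prime_subfield_iff)
qed

abbreviation Tr :: "'a \<Rightarrow> 'a" where "Tr \<equiv> trace p m"

lemma trace_power_p: "Tr x ^ p = Tr x"
proof -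
  define f where "f j = x ^ (p ^ j)" for j
  have "Tr x ^ p = (\<Sum>j<m. f (Suc j))"
    unfolding trace_def f_def using frobenius_sum[of "\<lambda>j. x ^ (p ^ j)" "{..<m}" 1]
    by (simp add: power_mult[symmetric] mult.commute)
  also have "\<dots> = (\<Sum>j<Suc m. f j) - f 0" by (subst sum.lessThan_Suc_shift) simp
  also have "\<dots> = (\<Sum>j<m. f j) + f m - f 0" by simp
  also have "f m = f 0" using power_card_eq_self by (simp add: f_def)
  finally show ?thesis by (simp add: trace_def f_def)
qed

lemma trace_in_prime_subfield: "Tr x \<in> prime_subfield"
  using trace_power_p by (simp add: prime_subfield_iff)

lemma trace_add: "Tr (x + y) = Tr x + Tr y"
  unfolding trace_def by (simp add: frobenius_add sum.distrib)

lemma trace_mult_prime_subfield: "c \<in> prime_subfield \<Longrightarrow> Tr (c * x) = c * Tr x"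
  unfolding trace_def by (simp add: power_mult_distrib prime_subfield_power sum_distrib_left)

lemma trace_0 [simp]: "Tr 0 = 0"
  using trace_mult_prime_subfield[of 0 0] by simp

text \<open>\<open>Tr\<close> is a nonzero polynomial of degree \<open>p ^ (m - 1) < p ^ m\<close>, so it cannot vanish
  on the whole field.\<close>
lemma trace_not_identically_zero: "\<exists>x. Tr x \<noteq> 0"
proof (rule ccontr)
  assume "\<not> ?thesis"
  hence all: "{x. Tr x = 0} = UNIV" by simp
  define T :: "'a poly" where "T = (\<Sum>j<m. monom 1 (p ^ j))"
  have poly_T: "poly T x = Tr x" for x unfolding T_def trace_def by (simp add: poly_sum poly_monom)
  have "coeff T (p ^ (m - 1)) = (\<Sum>j<m. if p ^ j = p ^ (m - 1) then 1 else 0)"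
    unfolding T_def by (simp add: coeff_sum coeff_monom)
  also have "\<dots> = (\<Sum>j<m. if j = m - 1 then 1 else 0)"
    using two_le_p by (intro sum.cong) (simp_all add: power_inject_exp)
  also have "\<dots> = 1" using m_pos by simp
  finally have "T \<noteq> 0" by auto
  have "degree T \<le> p ^ (m - 1)" unfolding T_def
    by (rule degree_sum_le) (use two_le_p in \<open>auto simp: degree_monom_eq intro!: power_increasing\<close>)
  moreover have "card {x. poly T x = 0} \<le> degree T" by (rule card_poly_roots_bound) fact
  ultimately have "p ^ m \<le> p ^ (m - 1)" using all card_UNIV by (simp add: poly_T)
  moreover have "p ^ (m - 1) < p ^ m" using two_le_p m_pos by (intro power_strict_increasing) auto
  ultimately show False by simp
qed

lemma trace_eq_1: "\<exists>x. Tr x = 1"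
proof -
  obtain x where x: "Tr x \<noteq> 0" using trace_not_identically_zero by blast
  have "Tr (inverse (Tr x) * x) = inverse (Tr x) * Tr x"
    by (intro trace_mult_prime_subfield prime_subfield_inverse trace_in_prime_subfield)
  thus ?thesis using x by auto
qed

definition zeta :: complex where
  "zeta = cis (2 * pi / p)"

lemma zeta_power_p: "zeta ^ p = 1"
  using two_le_p by (simp add: zeta_def DeMoivre)

lemma zeta_neq_1: "zeta \<noteq> 1"
proof
  assume "zeta = 1"
  then obtain j :: int where "2 * pi / p = j * 2 * pi"
    using cos_one_2pi_int[of "2 * pi / p"] by (auto simp: zeta_def complex_eq_iff)
  hence "of_int (int p * j) = (1 :: real)" using two_le_p by (simp add: field_simps)
  hence "int p * j = 1" by linarith
  thus False using two_le_p by (simp add: zmult_eq_1_iff)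
qed

lemma sum_zeta_powers: "(\<Sum>j<p. zeta ^ j) = 0"
  using zeta_neq_1 by (simp add: geometric_sum zeta_power_p)

text \<open>The exponent is some natural-number representative of \<open>c\<close>; as \<open>zeta ^ p = 1\<close>, the
  choice does not matter.\<close>
definition std_char :: "'a \<Rightarrow> complex" where
  "std_char c = zeta ^ inv_into UNIV of_nat c"

lemma std_char_of_nat: "std_char (of_nat j) = zeta ^ j"
proof -
  define i where "i = inv_into UNIV (of_nat :: nat \<Rightarrow> 'a) (of_nat j)"
  have "(of_nat i :: 'a) = of_nat j" unfolding i_def by (rule f_inv_into_f) simp
  hence "i mod p = j mod p" by (simp add: of_nat_eq_of_nat_iff_cong cong_def)
  hence "zeta ^ i = zeta ^ j" using power_eq_power_mod[OF zeta_power_p] by metis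
  thus ?thesis by (simp add: std_char_def i_def)
qed

lemma std_char_add:
  "a \<in> prime_subfield \<Longrightarrow> b \<in> prime_subfield \<Longrightarrow> std_char (a + b) = std_char a * std_char b"
  by (auto simp: prime_subfield_def std_char_of_nat power_add simp flip: of_nat_add)

lemma std_char_0 [simp]: "std_char 0 = 1"
  and std_char_1 [simp]: "std_char 1 = zeta"
  using std_char_of_nat[of 0] std_char_of_nat[of 1] by simp_all

lemma sum_std_char_nonzero: "(\<Sum>a\<in>prime_subfield - {0}. std_char a) = -1"
proof -
  have "(\<Sum>a\<in>prime_subfield. std_char a) = 0"
    unfolding prime_subfield_eq_image
    by (simp add: sum.reindex[OF inj_on_of_nat_lessThan_p] std_char_of_nat sum_zeta_powers)
  moreover have "(\<Sum>a\<in>prime_subfield. std_char a) = 1 + (\<Sum>a\<in>prime_subfield - {0}. std_char a)"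
    by (subst sum.remove[of _ 0]) simp_all
  ultimately show ?thesis by (simp add: add_eq_0_iff)
qed

definition canonical_char :: "'a \<Rightarrow> complex" where
  "canonical_char x = std_char (Tr x)"

lemma canonical_char_add: "canonical_char (x + y) = canonical_char x * canonical_char y"
  by (simp add: canonical_char_def trace_add std_char_add trace_in_prime_subfield)

lemma canonical_char_0 [simp]: "canonical_char 0 = 1"
  by (simp add: canonical_char_def)

lemma sum_canonical_char: "(\<Sum>x\<in>UNIV. canonical_char x) = 0"
proof -
  obtain a where a: "Tr a = 1" using trace_eq_1 by blast
  have "(\<Sum>x\<in>UNIV. canonical_char x) = (\<Sum>x\<in>UNIV. canonical_char (x + a))"
    by (rule sum.reindex_bij_witness[of _ "\<lambda>x. x + a" "\<lambda>x. x - a"]) auto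
  also have "\<dots> = zeta * (\<Sum>x\<in>UNIV. canonical_char x)"
    unfolding canonical_char_add sum_distrib_left by (simp add: canonical_char_def a mult.commute)
  finally have "(1 - zeta) * (\<Sum>x\<in>UNIV. canonical_char x) = 0"
    by (simp add: algebra_simps)
  thus ?thesis using zeta_neq_1 by simp
qed

lemma sum_canonical_char_mult:
  "(\<Sum>g\<in>UNIV. canonical_char (g * z)) = (if z = 0 then of_nat (p ^ m) else 0)"
proof (cases "z = 0")
  case False
  have "(\<Sum>g\<in>UNIV. canonical_char (g * z)) = (\<Sum>x\<in>UNIV. canonical_char x)"
    by (rule sum.reindex_bij_witness[of _ "\<lambda>x. x / z" "\<lambda>g. g * z"]) (use False in auto)
  thus ?thesis using False sum_canonical_char by simp
qed (simp add: card_UNIV)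

subsection \<open>Spectra of Cayley graphs on the additive group\<close>

definition char_sum :: "'a set \<Rightarrow> 'a \<Rightarrow> complex" where
  "char_sum S g = (\<Sum>s\<in>S. canonical_char (g * s))"

lemma cayley_out_neighbours: "{v. v - u \<in> (S :: 'a set)} = (+) u ` S"
proof (intro equalityI subsetI)
  fix v assume "v \<in> {v. v - u \<in> S}"
  thus "v \<in> (+) u ` S" by (intro image_eqI[of _ _ "v - u"]) auto
qed auto

lemma cayley_in_neighbours: "{v. u - v \<in> (S :: 'a set)} = (-) u ` S"
proof (intro equalityI subsetI)
  fix v assume "v \<in> {v. u - v \<in> S}"
  thus "v \<in> (-) u ` S" by (intro image_eqI[of _ _ "u - v"]) auto
qed auto

lemma cayley_regular: "graph_regular (\<lambda>u v. v - u \<in> (S :: 'a set)) (card S)"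
  by (simp add: graph_regular_def cayley_out_neighbours cayley_in_neighbours card_image inj_on_def)

lemma cayley_neighbour_sum: "(\<Sum>v\<in>{v. v - u \<in> (S :: 'a set)}. f v) = (\<Sum>s\<in>S. f (u + s))"
  unfolding cayley_out_neighbours by (simp add: sum.reindex inj_on_def)

lemma cayley_eigenvalue_char_sum: "graph_eigenvalue (\<lambda>u v. v - u \<in> (S :: 'a set)) (char_sum S g)"
  unfolding graph_eigenvalue_def
proof (intro exI conjI allI)
  show "(\<lambda>u. canonical_char (g * u)) \<noteq> (\<lambda>_. 0)"
    by (metis canonical_char_0 mult_zero_right zero_neq_one)
  fix u
  have "(\<Sum>v\<in>{v. v - u \<in> S}. canonical_char (g * v))
      = (\<Sum>s\<in>S. canonical_char (g * u) * canonical_char (g * s))"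
    unfolding cayley_neighbour_sum by (simp add: distrib_left canonical_char_add)
  also have "\<dots> = char_sum S g * canonical_char (g * u)"
    by (simp add: char_sum_def sum_distrib_left sum_distrib_right mult.commute)
  finally show "(\<Sum>v\<in>{v. v - u \<in> S}. canonical_char (g * v)) = char_sum S g * canonical_char (g * u)" .
qed

definition fourier :: "('a \<Rightarrow> complex) \<Rightarrow> 'a \<Rightarrow> complex" where
  "fourier f g = (\<Sum>u\<in>UNIV. f u * canonical_char (- (g * u)))"

lemma fourier_inversion: "(\<Sum>g\<in>UNIV. fourier f g * canonical_char (g * u)) = of_nat (p ^ m) * f u"
proof -
  have "(\<Sum>g\<in>UNIV. fourier f g * canonical_char (g * u))
      = (\<Sum>g\<in>UNIV. \<Sum>v\<in>UNIV. f v * canonical_char (g * (u - v)))"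
    unfolding fourier_def sum_distrib_right
    by (simp add: mult.assoc canonical_char_add[symmetric] algebra_simps)
  also have "\<dots> = (\<Sum>v\<in>UNIV. f v * (\<Sum>g\<in>UNIV. canonical_char (g * (u - v))))"
    unfolding sum_distrib_left by (rule sum.swap)
  also have "\<dots> = (\<Sum>v\<in>UNIV. if v = u then f v * of_nat (p ^ m) else 0)"
    by (intro sum.cong) (simp_all add: sum_canonical_char_mult)
  finally show ?thesis by simp
qed

lemma fourier_eigenfunction:
  assumes "\<And>u. (\<Sum>v\<in>{v. v - u \<in> S}. f v) = lam * f u"
  shows "lam * fourier f g = char_sum S g * fourier f g"
proof -
  have "lam * fourier f g = (\<Sum>u\<in>UNIV. (lam * f u) * canonical_char (- (g * u)))"
    by (simp add: fourier_def sum_distrib_left mult.assoc)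
  also have "\<dots> = (\<Sum>u\<in>UNIV. \<Sum>s\<in>S. f (u + s) * canonical_char (- (g * u)))"
    by (simp add: assms[symmetric] cayley_neighbour_sum sum_distrib_right)
  also have "\<dots> = (\<Sum>s\<in>S. \<Sum>u\<in>UNIV. f (u + s) * canonical_char (- (g * u)))"
    by (rule sum.swap)
  also have "\<dots> = (\<Sum>s\<in>S. \<Sum>v\<in>UNIV. f v * canonical_char (- (g * (v - s))))"
  proof (rule sum.cong[OF refl])
    fix s
    show "(\<Sum>u\<in>UNIV. f (u + s) * canonical_char (- (g * u)))
        = (\<Sum>v\<in>UNIV. f v * canonical_char (- (g * (v - s))))"
      by (rule sum.reindex_bij_witness[of _ "\<lambda>v. v - s" "\<lambda>u. u + s"]) auto
  qed
  also have "\<dots> = (\<Sum>s\<in>S. canonical_char (g * s) * fourier f g)"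
    unfolding fourier_def sum_distrib_left
    by (intro sum.cong refl) (simp add: algebra_simps canonical_char_add[symmetric])
  finally show ?thesis by (simp add: char_sum_def sum_distrib_right)
qed

lemma cayley_eigenvalue_is_char_sum:
  assumes "graph_eigenvalue (\<lambda>u v. v - u \<in> S) lam"
  obtains g where "lam = char_sum S g"
proof -
  obtain f :: "'a \<Rightarrow> complex" where "f \<noteq> (\<lambda>_. 0)"
    and eigen: "\<And>u. (\<Sum>v\<in>{v. v - u \<in> S}. f v) = lam * f u"
    using assms unfolding graph_eigenvalue_def by blast
  then obtain u where "f u \<noteq> 0" by auto
  hence "(\<Sum>g\<in>UNIV. fourier f g * canonical_char (g * u)) \<noteq> 0"
    unfolding fourier_inversion using two_le_p by simp
  then obtain g where "fourier f g \<noteq> 0" by (metis (mono_tags, lifting) mult_eq_0_iff sum.neutral)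
  thus ?thesis using fourier_eigenfunction[OF eigen, of g] that by simp
qed

lemma cayley_rtranclp_translate:
  "(\<lambda>u v. v - u \<in> (S :: 'a set))\<^sup>*\<^sup>* u v \<Longrightarrow> (\<lambda>u v. v - u \<in> S)\<^sup>*\<^sup>* (u + a) (v + a)"
  by (induction rule: rtranclp_induct) (auto elim: rtranclp.rtrancl_into_rtrancl)

lemma cayley_connected:
  assumes "\<And>V :: 'a set. 0 \<in> V \<Longrightarrow> (\<And>x y. x \<in> V \<Longrightarrow> y \<in> V \<Longrightarrow> x + y \<in> V) \<Longrightarrow> S \<subseteq> V \<Longrightarrow> V = UNIV"
  shows "graph_connected (\<lambda>u v. v - u \<in> S)"
proof -
  let ?E = "\<lambda>u v. v - u \<in> S"
  have "{x. ?E\<^sup>*\<^sup>* 0 x} = UNIV"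
  proof (rule assms)
    fix x y assume "x \<in> {x. ?E\<^sup>*\<^sup>* 0 x}" "y \<in> {x. ?E\<^sup>*\<^sup>* 0 x}"
    hence "?E\<^sup>*\<^sup>* 0 x" "?E\<^sup>*\<^sup>* x (y + x)"
      using cayley_rtranclp_translate[of S 0 y x] by simp_all
    thus "x + y \<in> {x. ?E\<^sup>*\<^sup>* 0 x}" by (simp add: add.commute)
  qed auto
  hence "?E\<^sup>*\<^sup>* u v" for u v using cayley_rtranclp_translate[of S 0 "v - u" u] by auto
  thus ?thesis by (simp add: graph_connected_def)
qed

lemma card_trace_level_mult:
  assumes closed: "\<And>c s. c \<in> prime_subfield \<Longrightarrow> c \<noteq> 0 \<Longrightarrow> s \<in> S \<Longrightarrow> c * s \<in> S"
    and c: "c \<in> prime_subfield" "c \<noteq> 0"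
  shows "card {s\<in>S. Tr (g * s) = c * a} = card {s\<in>S. Tr (g * s) = a}"
proof -
  have Tr_scale: "Tr (g * (d * s)) = d * Tr (g * s)" if "d \<in> prime_subfield" for d s
    using trace_mult_prime_subfield[OF that, of "g * s"] by (simp add: ac_simps)
  have c': "inverse c \<in> prime_subfield" "inverse c \<noteq> 0"
    using c by (simp_all add: prime_subfield_inverse)
  have "bij_betw ((*) c) {s\<in>S. Tr (g * s) = a} {s\<in>S. Tr (g * s) = c * a}"
    by (rule bij_betw_byWitness[where f' = "(*) (inverse c)"])
       (use c c' in \<open>auto simp: closed Tr_scale\<close>)
  thus ?thesis by (simp add: bij_betw_same_card)
qed

text \<open>Grouping a character sum over \<open>S\<close> by the value \<open>a\<close> of the trace, the
  level sets with \<open>a \<noteq> 0\<close> all have the same size, and the values of the standard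
  character on them add up to \<open>-1\<close>.\<close>
lemma char_sum_eq_weight:
  assumes closed: "\<And>c s. c \<in> prime_subfield \<Longrightarrow> c \<noteq> 0 \<Longrightarrow> s \<in> S \<Longrightarrow> c * s \<in> S"
  shows "char_sum S g
    = of_real (real (card S) - real p / (real p - 1) * real (card {s\<in>S. Tr (g * s) \<noteq> 0}))"
proof -
  define N where "N a = card {s\<in>S. Tr (g * s) = a}" for a
  have level: "N a = N 1" if "a \<in> prime_subfield - {0}" for a
    using card_trace_level_mult[OF closed, of a g 1] that by (simp add: N_def)
  have "char_sum S g = (\<Sum>a\<in>prime_subfield. \<Sum>s\<in>{s\<in>S. Tr (g * s) = a}. std_char (Tr (g * s)))"
    unfolding char_sum_def canonical_char_def
    by (rule sum.group[symmetric]) (auto simp: trace_in_prime_subfield)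
  also have "\<dots> = (\<Sum>a\<in>prime_subfield. of_nat (N a) * std_char a)"
    by (simp add: N_def)
  also have "\<dots> = of_nat (N 0) + (\<Sum>a\<in>prime_subfield - {0}. of_nat (N 1) * std_char a)"
    by (subst sum.remove[of _ 0]) (simp_all add: level)
  also have "\<dots> = of_nat (N 0) - of_nat (N 1)"
    by (simp add: sum_distrib_left[symmetric] sum_std_char_nonzero)
  finally have char_sum: "char_sum S g = of_nat (N 0) - of_nat (N 1)" .
  have "card S = (\<Sum>a\<in>prime_subfield. \<Sum>s\<in>{s\<in>S. Tr (g * s) = a}. 1)"
    unfolding card_eq_sum by (rule sum.group[symmetric]) (auto simp: trace_in_prime_subfield)
  also have "\<dots> = N 0 + (\<Sum>a\<in>prime_subfield - {0}. N 1)"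
    by (subst sum.remove[of _ 0]) (simp_all add: N_def[symmetric] level)
  finally have card_S: "card S = N 0 + (p - 1) * N 1"
    by (simp add: card_prime_subfield)
  have "card {s\<in>S. Tr (g * s) \<noteq> 0} = card (S - {s\<in>S. Tr (g * s) = 0})"
    by (intro arg_cong[where f = card]) auto
  also have "\<dots> = (p - 1) * N 1"
    by (subst card_Diff_subset) (auto simp: card_S N_def)
  finally have weight: "card {s\<in>S. Tr (g * s) \<noteq> 0} = (p - 1) * N 1" .
  have "real (card S) - real p / (real p - 1) * real (card {s\<in>S. Tr (g * s) \<noteq> 0})
      = real (N 0) - real (N 1)"
    unfolding weight card_S using two_le_p by (simp add: of_nat_diff field_simps)
  thus ?thesis by (simp add: char_sum)
qed

lemma poly_frobenius:
  assumes "\<And>i. coeff f i \<in> prime_subfield"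
  shows "poly f (x ^ (p ^ j)) = poly f x ^ (p ^ j)"
proof -
  have "poly f x ^ (p ^ j) = (\<Sum>i\<le>degree f. (coeff f i * x ^ i) ^ (p ^ j))"
    by (simp add: poly_altdef frobenius_sum)
  also have "\<dots> = (\<Sum>i\<le>degree f. coeff f i * (x ^ (p ^ j)) ^ i)"
    using assms by (simp add: power_mult_distrib prime_subfield_power flip: power_mult mult.commute)
  finally show ?thesis by (simp add: poly_altdef)
qed

text \<open>The distinct conjugates \<open>b ^ p ^ j\<close> are \<open>m\<close> roots of any polynomial over the prime
  field vanishing at \<open>b\<close>.\<close>
lemma poly_eq_0_if_root_with_distinct_conjugates:
  fixes b :: 'a
  assumes conj: "inj_on (\<lambda>j. b ^ (p ^ j)) {..<m}"
    and coeffs: "\<And>i. coeff f i \<in> prime_subfield" and "degree f < m" and "poly f b = 0"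
  shows "f = 0"
proof (rule ccontr)
  assume "f \<noteq> 0"
  have "(\<lambda>j. b ^ (p ^ j)) ` {..<m} \<subseteq> {x. poly f x = 0}"
    using \<open>poly f b = 0\<close> poly_frobenius[OF coeffs] two_le_p by auto
  hence "card ((\<lambda>j. b ^ (p ^ j)) ` {..<m}) \<le> card {x. poly f x = 0}"
    by (intro card_mono) auto
  also have "\<dots> \<le> degree f" by (rule card_poly_roots_bound) fact
  finally show False using conj \<open>degree f < m\<close> by (simp add: card_image)
qed

text \<open>The \<open>p ^ m\<close> combinations \<open>\<Sum>i<m. c i * b ^ i\<close> with \<open>c i < p\<close> are pairwise distinct, so
  they exhaust the field.\<close>
lemma additively_closed_eq_UNIV:
  fixes b :: 'a and V :: "'a set"
  assumes conj: "inj_on (\<lambda>j. b ^ (p ^ j)) {..<m}"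
    and "0 \<in> V" and add: "\<And>x y. x \<in> V \<Longrightarrow> y \<in> V \<Longrightarrow> x + y \<in> V"
    and powers: "\<And>i. b ^ i \<in> V"
  shows "V = UNIV"
proof -
  have of_nat_mult_in: "of_nat c * x \<in> V" if "x \<in> V" for c x
    by (induction c) (auto simp: distrib_right \<open>0 \<in> V\<close> intro: add that)
  have sum_in: "(\<Sum>i\<in>A. f i) \<in> V" if "\<And>i. i \<in> A \<Longrightarrow> f i \<in> V" for A and f :: "nat \<Rightarrow> 'a"
    using that by (induction A rule: infinite_finite_induct) (auto simp: \<open>0 \<in> V\<close> intro: add)
  define C where "C = PiE {..<m} (\<lambda>_. {..<p})"
  define phi where "phi c = (\<Sum>i<m. (of_nat (c i) :: 'a) * b ^ i)" for c
  have "phi ` C \<subseteq> V"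
    unfolding phi_def by (auto intro!: sum_in of_nat_mult_in powers)
  moreover have "inj_on phi C"
  proof (rule inj_onI)
    fix c c' assume c: "c \<in> C" and c': "c' \<in> C" and "phi c = phi c'"
    define f where "f = (\<Sum>i<m. monom ((of_nat (c i) :: 'a) - of_nat (c' i)) i)"
    have coeff_f: "coeff f j = (if j < m then of_nat (c j) - of_nat (c' j) else 0)" for j
      unfolding f_def by (simp add: coeff_sum coeff_monom)
    have "degree f < m"
      using m_pos coeff_f by (intro degree_lessI) auto
    moreover have "poly f b = phi c - phi c'"
      unfolding f_def phi_def by (simp add: poly_sum poly_monom sum_subtractf algebra_simps)
    ultimately have "f = 0"
      using \<open>phi c = phi c'\<close> coeff_f
      by (intro poly_eq_0_if_root_with_distinct_conjugates[OF conj]) (auto intro: prime_subfield_diff)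
    hence "(of_nat (c j) :: 'a) = of_nat (c' j)" if "j < m" for j
      using coeff_f[of j] that by simp
    hence "c j = c' j" if "j < m" for j
      using that inj_on_of_nat_lessThan_p c c' unfolding C_def by (auto simp: inj_on_def PiE_def Pi_def)
    thus "c = c'" using c c' unfolding C_def by (intro PiE_ext) auto
  qed
  ultimately have "card (UNIV :: 'a set) \<le> card V"
    using card_mono[of V "phi ` C"] card_UNIV by (simp add: card_image C_def card_PiE)
  thus ?thesis by (simp add: card_seteq)
qed

end

section \<open>The cyclotomic code and its Cayley graph\<close>

locale cyclotomic_code = finite_field_of_order p m for p m +
  fixes w :: "'a::{finite,field}" and k n :: nat
  assumes primitive: "primitive_element w"
    and k_dvd: "k dvd (p ^ m - 1) div (p - 1)"
    and n_def: "n = (p ^ m - 1) div k"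
    and n_primitive: "primitive_divisor p m n"
begin

lemma p_minus_1_dvd: "p - 1 dvd p ^ m - 1"
proof -
  have "[p = 1] (mod p - 1)" using two_le_p by (simp add: cong_le_nat exI[of _ 1])
  hence "[p ^ m = 1 ^ m] (mod p - 1)" by (rule cong_pow)
  thus ?thesis by (intro cong_to_1_nat) simp
qed

lemma k_mult_n: "k * n = p ^ m - 1"
proof -
  have "k dvd (p - 1) * ((p ^ m - 1) div (p - 1))" using k_dvd by (rule dvd_mult)
  hence "k dvd p ^ m - 1" using p_minus_1_dvd by simp
  thus ?thesis using n_def by simp
qed

lemma p_power_m_ge_2: "2 \<le> p ^ m"
proof -
  have "p ^ 1 \<le> p ^ m" using m_pos two_le_p by (intro power_increasing) auto
  thus ?thesis using two_le_p by simp
qed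

lemma k_pos: "0 < k" and n_pos: "0 < n"
  using k_mult_n p_power_m_ge_2 by (auto intro: Nat.gr0I)

lemma w_nonzero: "w \<noteq> 0"
  using primitive by (simp add: primitive_element_def)

lemma w_power_card_minus_1: "w ^ (p ^ m - 1) = 1"
proof -
  have "w * w ^ (p ^ m - 1) = w ^ Suc (p ^ m - 1)" by simp
  also have "Suc (p ^ m - 1) = p ^ m" using p_power_m_ge_2 by simp
  finally have "w * w ^ (p ^ m - 1) = w * 1" by (simp add: power_card_eq_self)
  thus ?thesis using w_nonzero by simp
qed

lemma inj_on_w_powers: "inj_on (\<lambda>i. w ^ i) {..<p ^ m - 1}"
proof (rule eq_card_imp_inj_on)
  have "(\<lambda>i. w ^ i) ` {..<p ^ m - 1} = UNIV - {0}"
  proof (intro equalityI subsetI)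
    fix x :: 'a assume "x \<in> UNIV - {0}"
    then obtain i where "x = w ^ i" using primitive by (auto simp: primitive_element_def)
    thus "x \<in> (\<lambda>i. w ^ i) ` {..<p ^ m - 1}"
      using power_eq_power_mod[OF w_power_card_minus_1] p_power_m_ge_2
      by (intro image_eqI[of _ _ "i mod (p ^ m - 1)"]) auto
  qed (use w_nonzero in auto)
  thus "card ((\<lambda>i. w ^ i) ` {..<p ^ m - 1}) = card {..<p ^ m - 1}"
    using card_UNIV by (simp add: card_Diff_singleton)
qed simp

lemma w_power_eq_1_iff: "w ^ i = 1 \<longleftrightarrow> p ^ m - 1 dvd i"
proof
  assume "w ^ i = 1"
  hence "w ^ (i mod (p ^ m - 1)) = w ^ 0"
    using power_eq_power_mod[OF w_power_card_minus_1] by simp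
  hence "i mod (p ^ m - 1) = 0"
    using inj_on_w_powers p_power_m_ge_2 by (auto simp: inj_on_def)
  thus "p ^ m - 1 dvd i" by auto
next
  assume "p ^ m - 1 dvd i"
  then obtain c where "i = (p ^ m - 1) * c" ..
  thus "w ^ i = 1" using w_power_card_minus_1 by (simp add: power_mult)
qed

definition beta :: 'a where
  "beta = w ^ k"

abbreviation Gamma :: "'a \<Rightarrow> 'a \<Rightarrow> bool" where
  "Gamma \<equiv> cayley_edge k"

abbreviation R :: "'a set" where
  "R \<equiv> kth_powers k"

lemma beta_power_in_kth_powers: "beta ^ i \<in> R"
proof -
  have "beta ^ i = (w ^ i) ^ k" by (simp add: beta_def power_mult[symmetric] mult.commute)
  thus ?thesis using w_nonzero by (auto simp: kth_powers_def)
qed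

lemma beta_power_eq_1_iff: "beta ^ i = 1 \<longleftrightarrow> n dvd i"
  unfolding beta_def power_mult[symmetric] w_power_eq_1_iff k_mult_n[symmetric]
  using k_pos by simp

lemma beta_nonzero: "beta \<noteq> 0"
  using w_nonzero by (simp add: beta_def)

lemma inj_on_beta_powers: "inj_on (\<lambda>i. beta ^ i) {..<n}"
proof -
  have eq: "i = j" if "i \<le> j" "j < n" "beta ^ i = beta ^ j" for i j
  proof -
    have "beta ^ i * beta ^ (j - i) = beta ^ j" using \<open>i \<le> j\<close> by (simp flip: power_add)
    also have "\<dots> = beta ^ i * 1" using that(3) by simp
    finally have "n dvd j - i" using beta_nonzero by (simp add: beta_power_eq_1_iff)
    show "i = j"
    proof (rule ccontr)
      assume "i \<noteq> j"
      hence "0 < j - i" "j - i < n" using that by auto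
      thus False using \<open>n dvd j - i\<close> nat_dvd_not_less by blast
    qed
  qed
  show ?thesis by (rule inj_onI) (metis eq lessThan_iff nat_le_linear)
qed

lemma kth_powers_eq: "R = (\<lambda>i. beta ^ i) ` {..<n}"
proof (intro equalityI subsetI)
  fix y :: 'a assume "y \<in> R"
  then obtain x where x: "x \<noteq> 0" "y = x ^ k" by (auto simp: kth_powers_def)
  then obtain j where "x = w ^ j" using primitive by (auto simp: primitive_element_def)
  hence "y = beta ^ j" using x by (simp add: beta_def power_mult[symmetric] mult.commute)
  also have "\<dots> = beta ^ (j mod n)" by (rule power_eq_power_mod) (simp add: beta_power_eq_1_iff)
  finally show "y \<in> (\<lambda>i. beta ^ i) ` {..<n}" using n_pos by auto
qed (auto simp: beta_power_in_kth_powers)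

lemma card_kth_powers: "card R = n"
  by (simp add: kth_powers_eq card_image inj_on_beta_powers)

text \<open>Here the hypothesis \<open>k dvd (p ^ m - 1) div (p - 1)\<close> enters: the nonzero elements of the
  prime field are the \<open>(p ^ m - 1) div (p - 1)\<close>-th powers.\<close>
lemma prime_subfield_subset_kth_powers:
  assumes "c \<in> prime_subfield" "c \<noteq> 0"
  shows "c \<in> R"
proof -
  obtain j where j: "c = w ^ j" using primitive assms(2) by (auto simp: primitive_element_def)
  have "c * c ^ (p - 1) = c * 1"
    using assms(1) two_le_p by (simp add: prime_subfield_iff flip: power_Suc)
  hence "w ^ (j * (p - 1)) = 1" using assms(2) j w_nonzero by (simp add: power_mult)
  hence "(p ^ m - 1) div (p - 1) * (p - 1) dvd j * (p - 1)"
    using p_minus_1_dvd by (simp add: w_power_eq_1_iff)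
  hence "(p ^ m - 1) div (p - 1) dvd j" using two_le_p by simp
  hence "k dvd j" using k_dvd dvd_trans by blast
  then obtain t where "j = k * t" ..
  hence "c = (w ^ t) ^ k" using j by (simp add: power_mult[symmetric] mult.commute)
  thus ?thesis using w_nonzero by (auto simp: kth_powers_def)
qed

text \<open>A coincidence \<open>beta ^ p ^ i = beta ^ p ^ j\<close> with \<open>i < j < m\<close> would give
  \<open>n dvd p ^ (m - j + i) - 1\<close>, contradicting the primitivity of \<open>n\<close>.\<close>
lemma inj_on_beta_conjugates: "inj_on (\<lambda>j. beta ^ (p ^ j)) {..<m}"
proof -
  have False if ij: "i < j" "j < m" and eq: "beta ^ (p ^ i) = beta ^ (p ^ j)" for i j
  proof -
    define a where "a = i + (m - j)"
    have a: "0 < a" "a < m" using ij by (auto simp: a_def)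
    have "p ^ j * p ^ (m - j) = p ^ m" using ij by (simp flip: power_add)
    have "beta ^ (p ^ a) = (beta ^ (p ^ i)) ^ (p ^ (m - j))"
      by (simp add: a_def power_add power_mult)
    also have "\<dots> = (beta ^ (p ^ j)) ^ (p ^ (m - j))" by (simp add: eq)
    also have "\<dots> = beta ^ (p ^ m)" by (simp add: \<open>p ^ j * p ^ (m - j) = p ^ m\<close> flip: power_mult)
    also have "\<dots> = beta * 1" by (simp add: power_card_eq_self)
    finally have "beta * beta ^ (p ^ a - 1) = beta * 1"
      using two_le_p by (simp flip: power_Suc)
    hence "n dvd p ^ a - 1" using beta_nonzero by (simp add: beta_power_eq_1_iff)
    thus False using n_primitive a by (auto simp: primitive_divisor_def)
  qed
  thus ?thesis by (intro inj_onI) (metis lessThan_iff linorder_neqE_nat)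
qed

lemma kth_powers_generate:
  fixes V :: "'a set"
  assumes "0 \<in> V" "\<And>x y. x \<in> V \<Longrightarrow> y \<in> V \<Longrightarrow> x + y \<in> V" "R \<subseteq> V"
  shows "V = UNIV"
  using assms beta_power_in_kth_powers by (intro additively_closed_eq_UNIV[OF inj_on_beta_conjugates]) auto

lemma Gamma_connected: "graph_connected Gamma"
  unfolding cayley_edge_conv by (intro cayley_connected kth_powers_generate)

lemma Gamma_regular: "graph_regular Gamma n"
  using cayley_regular[of R] by (simp add: cayley_edge_conv card_kth_powers)

lemma cw_weight_eq: "cw_weight p m w k n g = card {s \<in> R. Tr (g * s) \<noteq> 0}"
proof -
  have "{s \<in> R. Tr (g * s) \<noteq> 0}
      = (\<lambda>i. beta ^ i) ` {i. i < n \<and> Tr (g * w ^ (k * i)) \<noteq> 0}"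
    by (auto simp: kth_powers_eq beta_def power_mult)
  moreover have "inj_on (\<lambda>i. beta ^ i) {i. i < n \<and> Tr (g * w ^ (k * i)) \<noteq> 0}"
    by (rule inj_on_subset[OF inj_on_beta_powers]) auto
  ultimately show ?thesis by (simp add: cw_weight_def card_image)
qed

lemma cw_weight_pos:
  assumes "g \<noteq> 0"
  shows "0 < cw_weight p m w k n g"
proof (rule ccontr)
  assume "\<not> ?thesis"
  hence "R \<subseteq> {x. Tr (g * x) = 0}" by (auto simp: cw_weight_eq)
  hence "{x. Tr (g * x) = 0} = UNIV" by (intro kth_powers_generate) (auto simp: distrib_left trace_add)
  hence "Tr (g * (x / g)) = 0" for x by blast
  thus False using assms trace_not_identically_zero by simp
qed

definition eigenvalue_of_weight :: "real \<Rightarrow> real" where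
  "eigenvalue_of_weight x = real n - real p / (real p - 1) * x"

lemma eigenvalue_of_weight_le_iff:
  "eigenvalue_of_weight x \<le> t \<longleftrightarrow> (real p - 1) / real p * (real n - t) \<le> x"
  using two_le_p by (simp add: eigenvalue_of_weight_def field_simps)

lemma eigenvalue_of_weight_nonneg_iff:
  "0 \<le> eigenvalue_of_weight x \<longleftrightarrow> x \<le> (real p - 1) / real p * real n"
  using two_le_p by (simp add: eigenvalue_of_weight_def field_simps)

lemma eigenvalue_of_weight_less: "0 < x \<Longrightarrow> eigenvalue_of_weight x < real n"
  using two_le_p by (simp add: eigenvalue_of_weight_def)

lemma eigenvalue_of_weight_mono: "x \<le> y \<Longrightarrow> eigenvalue_of_weight y \<le> eigenvalue_of_weight x"
  unfolding eigenvalue_of_weight_def using two_le_p by (intro diff_left_mono mult_left_mono) auto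

lemma Gamma_eigenvalue_iff:
  "graph_eigenvalue Gamma lam
    \<longleftrightarrow> (\<exists>g. lam = of_real (eigenvalue_of_weight (cw_weight p m w k n g)))"
proof -
  have closed: "c * s \<in> R" if "c \<in> prime_subfield" "c \<noteq> 0" "s \<in> R" for c s
    using that prime_subfield_subset_kth_powers kth_powers_mult by blast
  have char_sum: "char_sum R g = of_real (eigenvalue_of_weight (cw_weight p m w k n g))" for g
  proof -
    have "char_sum R g
        = of_real (real (card R) - real p / (real p - 1) * real (card {s\<in>R. Tr (g * s) \<noteq> 0}))"
      by (rule char_sum_eq_weight) (rule closed)
    thus ?thesis by (simp only: eigenvalue_of_weight_def cw_weight_eq card_kth_powers)
  qed
  show ?thesis
    unfolding cayley_edge_conv
    by (metis char_sum cayley_eigenvalue_char_sum cayley_eigenvalue_is_char_sum)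
qed

lemma ramanujan_iff_weights:
  "ramanujan Gamma n \<longleftrightarrow>
    (\<forall>g. \<bar>eigenvalue_of_weight (cw_weight p m w k n g)\<bar> \<noteq> real n \<longrightarrow>
         \<bar>eigenvalue_of_weight (cw_weight p m w k n g)\<bar> \<le> 2 * sqrt (real n - 1))"
  by (auto simp: ramanujan_def Gamma_connected Gamma_regular Gamma_eigenvalue_iff)

abbreviation dmin :: nat where
  "dmin \<equiv> min_weight p m w k n"

abbreviation dmax :: nat where
  "dmax \<equiv> max_weight p m w k n"

lemma nonzero_code_weights: "code_weights p m w k n - {0} = cw_weight p m w k n ` (UNIV - {0})"
proof (intro equalityI subsetI)
  fix x assume "x \<in> code_weights p m w k n - {0}"
  then obtain g where "x = cw_weight p m w k n g" "x \<noteq> 0" by (auto simp: code_weights_def)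
  moreover from this have "g \<noteq> 0" by (auto simp: cw_weight_def)
  ultimately show "x \<in> cw_weight p m w k n ` (UNIV - {0})" by blast
next
  fix x assume "x \<in> cw_weight p m w k n ` (UNIV - {0})"
  then obtain g where "g \<noteq> 0" "x = cw_weight p m w k n g" by blast
  thus "x \<in> code_weights p m w k n - {0}" using cw_weight_pos[of g] by (simp add: code_weights_def)
qed

lemma min_weight_attained: "\<exists>g. g \<noteq> 0 \<and> cw_weight p m w k n g = dmin"
proof -
  have "cw_weight p m w k n 1 \<in> code_weights p m w k n - {0}"
    using cw_weight_pos[of 1] by (simp add: code_weights_def)
  hence "code_weights p m w k n - {0} \<noteq> {}" by blast
  hence "dmin \<in> code_weights p m w k n - {0}"
    unfolding min_weight_def by (intro Min_in) (simp_all add: code_weights_def)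
  thus ?thesis unfolding nonzero_code_weights by auto
qed

lemma min_weight_le:
  assumes "g \<noteq> 0"
  shows "dmin \<le> cw_weight p m w k n g"
  unfolding min_weight_def using cw_weight_pos[OF assms]
  by (intro Min_le) (auto simp: code_weights_def)

lemma le_max_weight: "cw_weight p m w k n g \<le> dmax"
  unfolding max_weight_def by (rule Max_ge) (auto simp: code_weights_def)

lemma min_weight_pos: "0 < dmin"
  using min_weight_attained cw_weight_pos by metis

lemma max_weight_pos: "0 < dmax"
  using min_weight_attained min_weight_pos le_max_weight by (metis order_less_le_trans)

lemma min_weight_bound_if_ramanujan:
  assumes "ramanujan Gamma n" and "real dmin \<le> (real p - 1) / real p * real n"
  shows "(real p - 1) / real p * (real n - 2 * sqrt (real n - 1)) \<le> real dmin"
proof -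
  obtain g where g: "cw_weight p m w k n g = dmin" using min_weight_attained by blast
  have "0 \<le> eigenvalue_of_weight dmin" "eigenvalue_of_weight dmin < real n"
    using assms(2) min_weight_pos by (simp_all add: eigenvalue_of_weight_nonneg_iff eigenvalue_of_weight_less)
  moreover have "\<bar>eigenvalue_of_weight dmin\<bar> \<noteq> real n \<longrightarrow> \<bar>eigenvalue_of_weight dmin\<bar> \<le> 2 * sqrt (real n - 1)"
    using assms(1) unfolding ramanujan_iff_weights g[symmetric] by blast
  ultimately have "eigenvalue_of_weight dmin \<le> 2 * sqrt (real n - 1)" by simp
  thus ?thesis by (simp add: eigenvalue_of_weight_le_iff)
qed

text \<open>If the smallest eigenvalue is not the one of largest modulus, every nontrivial
  eigenvalue lies in \<open>[-eigenvalue_of_weight dmin, eigenvalue_of_weight dmin]\<close>.\<close>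
lemma ramanujan_iff_min_weight_bound:
  assumes "- eigenvalue_of_weight dmax \<le> eigenvalue_of_weight dmin"
  shows "ramanujan Gamma n \<longleftrightarrow> (real p - 1) / real p * (real n - 2 * sqrt (real n - 1)) \<le> real dmin"
proof
  assume "ramanujan Gamma n"
  obtain g where g: "cw_weight p m w k n g = dmin" using min_weight_attained by blast
  have "eigenvalue_of_weight dmin < real n" "eigenvalue_of_weight dmax < real n"
    using min_weight_pos max_weight_pos by (simp_all add: eigenvalue_of_weight_less)
  hence "\<bar>eigenvalue_of_weight dmin\<bar> \<noteq> real n" using assms by (auto simp: abs_if)
  moreover have "\<bar>eigenvalue_of_weight dmin\<bar> \<noteq> real n \<longrightarrow> \<bar>eigenvalue_of_weight dmin\<bar> \<le> 2 * sqrt (real n - 1)"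
    using \<open>ramanujan Gamma n\<close> unfolding ramanujan_iff_weights g[symmetric] by blast
  ultimately have "eigenvalue_of_weight dmin \<le> 2 * sqrt (real n - 1)" by (simp add: abs_le_iff)
  thus "(real p - 1) / real p * (real n - 2 * sqrt (real n - 1)) \<le> real dmin"
    by (simp add: eigenvalue_of_weight_le_iff)
next
  assume "(real p - 1) / real p * (real n - 2 * sqrt (real n - 1)) \<le> real dmin"
  hence bound: "eigenvalue_of_weight dmin \<le> 2 * sqrt (real n - 1)"
    by (simp add: eigenvalue_of_weight_le_iff)
  show "ramanujan Gamma n"
    unfolding ramanujan_iff_weights
  proof (intro allI impI)
    fix g assume "\<bar>eigenvalue_of_weight (cw_weight p m w k n g)\<bar> \<noteq> real n"
    hence "g \<noteq> 0" by (auto simp: cw_weight_def eigenvalue_of_weight_def)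
    hence "eigenvalue_of_weight dmax \<le> eigenvalue_of_weight (cw_weight p m w k n g)"
      "eigenvalue_of_weight (cw_weight p m w k n g) \<le> eigenvalue_of_weight dmin"
      by (simp_all add: eigenvalue_of_weight_mono le_max_weight min_weight_le)
    thus "\<bar>eigenvalue_of_weight (cw_weight p m w k n g)\<bar> \<le> 2 * sqrt (real n - 1)"
      using assms bound by linarith
  qed
qed

end


theorem corollary5p4:
  fixes w :: "'a::{finite,field}" and p m k n :: nat
  assumes "prime p" and "card (UNIV :: 'a set) = p ^ m"
    and "primitive_element w"
    and "k dvd (p ^ m - 1) div (p - 1)"
    and "n = (p ^ m - 1) div k"
    and "primitive_divisor p m n"
  defines "d \<equiv> real (min_weight p m w k n)"
    and "lam \<equiv> max (real n - real p / (real p - 1) * real (min_weight p m w k n))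
                   (real p / (real p - 1) * real (max_weight p m w k n) - real n)"
  shows "(ramanujan (cayley_edge k :: 'a \<Rightarrow> 'a \<Rightarrow> bool) n \<and> d \<le> (real p - 1) / real p * real n
            \<longrightarrow> d \<ge> (real p - 1) / real p * (real n - 2 * sqrt (real n - 1)))
       \<and> (lam = real n - real p / (real p - 1) * d
            \<longrightarrow> (ramanujan (cayley_edge k :: 'a \<Rightarrow> 'a \<Rightarrow> bool) n
                 \<longleftrightarrow> d \<ge> (real p - 1) / real p * (real n - 2 * sqrt (real n - 1))))"
proof -
  interpret cyclotomic_code p m w k n
    using assms(1-6) by unfold_locales
  have "lam = real n - real p / (real p - 1) * d
      \<longleftrightarrow> - eigenvalue_of_weight dmax \<le> eigenvalue_of_weight dmin"
    by (auto simp: lam_def d_def eigenvalue_of_weight_def max_def)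
  thus ?thesis
    using min_weight_bound_if_ramanujan ramanujan_iff_min_weight_bound unfolding d_def by blast
qed

end
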